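(* Let $n\ge1$, $h>0$, and let $f$ be a real function defined at the points $x_m=mh$, $m=-n,\dots,n$; write $f_m=f(mh)$. Let $P_{2n}$ be the unique polynomial of degree at most $2n$ with $P_{2n}(mh)=f_m$ for $m=-n,\dots,n$. Then $$P_{2n}''(0)=\frac{1}{h^2}\sum_{m=1}^{n}\alpha_m^{(2)}(n)\,(f_m-2f_0+f_{-m}),\qquad\text{where } \alpha_m^{(2)}(n)=\frac{1}{m^2\,\pi_m(n)},\quad \pi_m(n)=\prod_{k=1,\,k\ne m}^{n}\left(1-\frac{m^2}{k^2}\right).$$ *)

theory Defs
  imports "HOL-Computational_Algebra.Polynomial"
begin

definition pi_coef :: "nat \<Rightarrow> nat \<Rightarrow> real" where
  "pi_coef m n = (\<Prod>k\<in>{1..n} - {m}. 1 - (real m)\<^sup>2 / (real k)\<^sup>2)"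

definition alpha2 :: "nat \<Rightarrow> nat \<Rightarrow> real" where
  "alpha2 m n = 1 / ((real m)\<^sup>2 * pi_coef m n)"

end

theory Submission
  imports Defs
begin

(* Write P x = (\<Sum>i. c i * x ^ i). The symmetric second difference P(mh) - 2 P(0) + P(-mh)
   equals 2 * (\<Sum>j\<ge>1. c (2j) * h ^ 2j * m ^ 2j), and alpha2 m n * m ^ 2j = m ^ (2j - 2) / pi_coef m n.
   So everything reduces to (\<Sum>m=1..n. m ^ 2k / pi_coef m n) = 0 ^ k for k < n, which is
   Lagrange interpolation of x ^ k at the nodes 1, 4, ..., n ^ 2 evaluated at x = 0:
   1 / pi_coef m n is the value at 0 of the Lagrange basis polynomial of the node m ^ 2. *)

lemma poly_lagrange_interpolation:
  fixes p :: "'a::field poly" and t :: "'b \<Rightarrow> 'a"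
  assumes "finite I" and "inj_on t I" and "degree p < card I"
  shows "poly p x = (\<Sum>i\<in>I. poly p (t i) * (\<Prod>j\<in>I - {i}. (x - t j) / (t i - t j)))"
proof -
  define L where
    "L = (\<Sum>i\<in>I. smult (poly p (t i)) (\<Prod>j\<in>I - {i}. smult (1 / (t i - t j)) [:- t j, 1:]))"
  have poly_L: "poly L y = (\<Sum>i\<in>I. poly p (t i) * (\<Prod>j\<in>I - {i}. (y - t j) / (t i - t j)))" for y
    by (simp add: L_def poly_sum poly_prod diff_divide_distrib)
  have "degree L \<le> card I - 1"
    unfolding L_def
  proof (rule degree_sum_le)
    fix i assume "i \<in> I"
    have "degree (smult c [:- t j, 1:]) \<le> 1" for c j
      by (rule order.trans[OF degree_smult_le]) simp
    then have "degree (\<Prod>j\<in>I - {i}. smult (1 / (t i - t j)) [:- t j, 1:]) \<le> (\<Sum>j\<in>I - {i}. 1)"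
      by (intro order.trans[OF degree_prod_sum_le] sum_mono) (simp_all add: assms(1))
    then show "degree (smult (poly p (t i)) (\<Prod>j\<in>I - {i}. smult (1 / (t i - t j)) [:- t j, 1:]))
        \<le> card I - 1"
      using \<open>i \<in> I\<close> assms(1) by (auto intro: order.trans[OF degree_smult_le])
  qed (simp add: assms(1))
  moreover have "poly L (t i) = poly p (t i)" if "i \<in> I" for i
  proof -
    have node_ne: "t i \<noteq> t j" if "j \<in> I - {i}" for j
      using that \<open>i \<in> I\<close> assms(2) by (auto dest: inj_onD)
    have "poly L (t i) = poly p (t i) * (\<Prod>j\<in>I - {i}. (t i - t j) / (t i - t j))
        + (\<Sum>k\<in>I - {i}. poly p (t k) * (\<Prod>j\<in>I - {k}. (t i - t j) / (t k - t j)))"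
      using that assms(1) by (simp add: poly_L sum.remove)
    also have "(\<Prod>j\<in>I - {i}. (t i - t j) / (t i - t j)) = 1"
      using node_ne by (intro prod.neutral) simp
    also have "(\<Sum>k\<in>I - {i}. poly p (t k) * (\<Prod>j\<in>I - {k}. (t i - t j) / (t k - t j))) = 0"
      using that assms(1) by (intro sum.neutral ballI) (auto intro!: prod_zero)
    finally show ?thesis by simp
  qed
  ultimately have "L = p"
    using assms card_image[OF assms(2)] by (intro poly_eqI_degree[of "t ` I"]) auto
  then show ?thesis by (simp flip: poly_L)
qed

lemma inverse_pi_coef_eq_lagrange_basis:
  assumes "m \<in> {1..n}"
  shows "1 / pi_coef m n
    = (\<Prod>k\<in>{1..n} - {m}. (0 - (real k)\<^sup>2) / ((real m)\<^sup>2 - (real k)\<^sup>2))"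
proof -
  have "1 / pi_coef m n = (\<Prod>k\<in>{1..n} - {m}. inverse (1 - (real m)\<^sup>2 / (real k)\<^sup>2))"
    unfolding pi_coef_def by (simp add: prod_inversef[symmetric] divide_inverse o_def)
  also have "\<dots> = (\<Prod>k\<in>{1..n} - {m}. (0 - (real k)\<^sup>2) / ((real m)\<^sup>2 - (real k)\<^sup>2))"
  proof (rule prod.cong[OF refl])
    fix k assume "k \<in> {1..n} - {m}"
    then have "(real k)\<^sup>2 \<noteq> 0" "(real m)\<^sup>2 - (real k)\<^sup>2 \<noteq> 0" by auto
    then show "inverse (1 - (real m)\<^sup>2 / (real k)\<^sup>2) = (0 - (real k)\<^sup>2) / ((real m)\<^sup>2 - (real k)\<^sup>2)"
      by (simp add: field_simps)
  qed
  finally show ?thesis .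
qed

lemma sum_even_power_div_pi_coef:
  assumes "j < n"
  shows "(\<Sum>m=1..n. real m ^ (2 * j) / pi_coef m n) = 0 ^ j"
proof -
  have "inj_on (\<lambda>k. (real k)\<^sup>2) {1..n}" by (auto simp: inj_on_def)
  from poly_lagrange_interpolation[OF _ this, of "monom 1 j" 0] assms
  have "0 ^ j = (\<Sum>m=1..n. ((real m)\<^sup>2) ^ j
      * (\<Prod>k\<in>{1..n} - {m}. (0 - (real k)\<^sup>2) / ((real m)\<^sup>2 - (real k)\<^sup>2)))"
    by (simp add: poly_monom degree_monom_eq)
  also have "\<dots> = (\<Sum>m=1..n. real m ^ (2 * j) / pi_coef m n)"
    using inverse_pi_coef_eq_lagrange_basis
    by (intro sum.cong refl) (simp add: power_mult divide_inverse)
  finally show ?thesis ..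
qed

lemma sum_alpha2_second_difference_power:
  assumes "i \<le> 2 * n"
  shows "(\<Sum>m=1..n. alpha2 m n * (real m ^ i - 2 * 0 ^ i + (- real m) ^ i))
    = (if i = 2 then 2 else 0)"
proof (cases "odd i \<or> i = 0")
  case True
  then show ?thesis by (auto simp: power_0_left)
next
  case False
  then obtain j where i: "i = 2 * Suc j"
    by (metis evenE not0_implies_Suc mult_0_right)
  with assms have "j < n" by simp
  have "(\<Sum>m=1..n. alpha2 m n * (real m ^ i - 2 * 0 ^ i + (- real m) ^ i))
      = 2 * (\<Sum>m=1..n. real m ^ (2 * j) / pi_coef m n)"
    unfolding sum_distrib_left
  proof (rule sum.cong[OF refl])
    fix m assume "m \<in> {1..n}"
    then have "real m \<noteq> 0" by simp
    then show "alpha2 m n * (real m ^ i - 2 * 0 ^ i + (- real m) ^ i)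
        = 2 * (real m ^ (2 * j) / pi_coef m n)"
      unfolding alpha2_def i by (simp add: field_simps power_add power2_eq_square)
  qed
  also have "\<dots> = 2 * 0 ^ j"
    by (simp only: sum_even_power_div_pi_coef[OF \<open>j < n\<close>])
  finally show ?thesis
    using i by simp
qed

lemma poly_second_difference:
  fixes p :: "'a::comm_ring_1 poly"
  assumes "degree p \<le> N"
  shows "poly p (a * h) - 2 * poly p 0 + poly p (- (a * h))
    = (\<Sum>i\<le>N. coeff p i * h ^ i * (a ^ i - 2 * 0 ^ i + (- a) ^ i))"
proof -
  have poly_p: "poly p x = (\<Sum>i\<le>N. coeff p i * x ^ i)" for x
    unfolding poly_altdef using assms by (intro sum.mono_neutral_left) (auto intro!: le_degree)
  have "poly p (a * h) - 2 * poly p 0 + poly p (- (a * h))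
      = (\<Sum>i\<le>N. coeff p i * (a * h) ^ i - 2 * (coeff p i * 0 ^ i) + coeff p i * (- (a * h)) ^ i)"
    unfolding poly_p by (simp add: sum_subtractf sum.distrib sum_distrib_left)
  also have "\<dots> = (\<Sum>i\<le>N. coeff p i * h ^ i * (a ^ i - 2 * 0 ^ i + (- a) ^ i))"
  proof (rule sum.cong[OF refl])
    fix i
    have "(- (a * h)) ^ i = (- a) ^ i * h ^ i"
      by (simp flip: power_mult_distrib)
    moreover have "0 ^ i = 0 ^ i * h ^ i"
      by (simp add: power_0_left)
    ultimately show "coeff p i * (a * h) ^ i - 2 * (coeff p i * 0 ^ i) + coeff p i * (- (a * h)) ^ i
        = coeff p i * h ^ i * (a ^ i - 2 * 0 ^ i + (- a) ^ i)"
      by (simp add: algebra_simps)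
  qed
  finally show ?thesis .
qed

lemma alpha2_second_difference_exact:
  fixes p :: "real poly"
  assumes "degree p \<le> 2 * n"
  shows "(\<Sum>m=1..n. alpha2 m n * (poly p (real m * h) - 2 * poly p 0 + poly p (- (real m * h))))
    = h\<^sup>2 * poly (pderiv (pderiv p)) 0"
proof -
  have "(\<Sum>m=1..n. alpha2 m n * (poly p (real m * h) - 2 * poly p 0 + poly p (- (real m * h))))
      = (\<Sum>i\<le>2 * n. coeff p i * h ^ i
          * (\<Sum>m=1..n. alpha2 m n * (real m ^ i - 2 * 0 ^ i + (- real m) ^ i)))"
    unfolding poly_second_difference[OF assms] sum_distrib_left
    by (subst sum.swap) (simp add: ac_simps)
  also have "\<dots> = (\<Sum>i\<le>2 * n. if i = 2 then 2 * coeff p 2 * h\<^sup>2 else 0)"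
  proof (rule sum.cong[OF refl])
    fix i assume "i \<in> {..2 * n}"
    with sum_alpha2_second_difference_power[of i n]
    show "coeff p i * h ^ i * (\<Sum>m=1..n. alpha2 m n * (real m ^ i - 2 * 0 ^ i + (- real m) ^ i))
        = (if i = 2 then 2 * coeff p 2 * h\<^sup>2 else 0)"
      by simp
  qed
  also have "\<dots> = 2 * coeff p 2 * h\<^sup>2"
    using assms by (auto intro: coeff_eq_0)
  also have "\<dots> = h\<^sup>2 * poly (pderiv (pderiv p)) 0"
    by (simp add: poly_0_coeff_0 coeff_pderiv numeral_2_eq_2)
  finally show ?thesis .
qed

theorem mainTheorem5:
  fixes n :: nat and h :: real and f :: "real \<Rightarrow> real" and P :: "real poly"
  assumes "n \<ge> 1" and "h > 0"
    and "degree P \<le> 2 * n"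
    and "\<And>m::int. - int n \<le> m \<Longrightarrow> m \<le> int n \<Longrightarrow> poly P (of_int m * h) = f (of_int m * h)"
  shows "poly (pderiv (pderiv P)) 0 =
    (1 / h\<^sup>2) * (\<Sum>m=1..n. alpha2 m n *
        (f (real m * h) - 2 * f 0 + f (- (real m * h))))"
proof -
  have "(\<Sum>m=1..n. alpha2 m n * (f (real m * h) - 2 * f 0 + f (- (real m * h))))
      = (\<Sum>m=1..n. alpha2 m n * (poly P (real m * h) - 2 * poly P 0 + poly P (- (real m * h))))"
    using assms(4)[of 0] assms(4)[of "int _"] assms(4)[of "- int _"] by (intro sum.cong refl) simp
  also have "\<dots> = h\<^sup>2 * poly (pderiv (pderiv P)) 0"
    by (rule alpha2_second_difference_exact[OF assms(3)])
  finally show ?thesis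
    using assms(2) by simp
qed

end
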